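(* Let $W\in\{0,1\}^{n\times n}$ be a random adjacency matrix from a latent space model with population matrix $\mathscr{W}=\mathbb{E}(W)$, and let $L$ and $\mathscr{L}$ be the observed and population normalized graph Laplacians. Let $c_i=\mathscr{D}_{ii}/n$ and $\tau=\min_{i=1,\dots,n}c_i$. If $n^{1/2}/\log n>2$, then \[ \mathbb{P}\Bigl(\|LL-\mathscr{L}\mathscr{L}\|_F\ge\frac{32\sqrt2\,\log n}{\tau^2n^{1/2}}\Bigr)\le4n^{2-2\tau^2\log n}. \]
   Context: Latent space model (latent vectors treated as fixed): $W$ is a symmetric $\{0,1\}$-valued $n\times n$ matrix with $W_{ii}=0$, and the entries $W_{ij}$, $i<j$, are independent Bernoulli with means $\mathscr{W}_{ij}\in[0,1]$; $\mathscr{W}=\mathbb{E}(W)$. $D$ is diagonal with $D_{ii}=\sum_kW_{ik}$, $L=D^{-1/2}WD^{-1/2}$; $\mathscr{D}$ is diagonal with $\mathscr{D}_{ii}=\sum_k\mathscr{W}_{ik}$, $\mathscr{L}=\mathscr{D}^{-1/2}\mathscr{W}\mathscr{D}^{-1/2}$. $\|\cdot\|_F$ is the Frobenius norm. *)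

theory Defs
  imports "HOL-Probability.Probability"
begin

text \<open>n x n real matrices are represented as functions nat => nat => real,
  only the entries with indices below n being relevant.\<close>

definition upper_pairs :: "nat \<Rightarrow> (nat \<times> nat) set" where
  "upper_pairs n = {(i, j). i < j \<and> j < n}"

text \<open>Distribution of the independent upper-triangular entries W_ij (i<j),
  W_ij ~ Bernoulli(P i j).  Outcomes are functions on pairs (i,j), i<j.\<close>
definition edge_pmf :: "nat \<Rightarrow> (nat \<Rightarrow> nat \<Rightarrow> real) \<Rightarrow> ((nat \<times> nat) \<Rightarrow> bool) pmf" where
  "edge_pmf n P = Pi_pmf (upper_pairs n) False (\<lambda>(i, j). bernoulli_pmf (P i j))"

definition adj :: "((nat \<times> nat) \<Rightarrow> bool) \<Rightarrow> nat \<Rightarrow> nat \<Rightarrow> real" where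
  "adj \<omega> i j = (if i = j then 0 else (if \<omega> (min i j, max i j) then 1 else 0))"

definition pop :: "(nat \<Rightarrow> nat \<Rightarrow> real) \<Rightarrow> nat \<Rightarrow> nat \<Rightarrow> real" where
  "pop P i j = (if i = j then 0 else P (min i j) (max i j))"

definition degree :: "nat \<Rightarrow> (nat \<Rightarrow> nat \<Rightarrow> real) \<Rightarrow> nat \<Rightarrow> real" where
  "degree n A i = (\<Sum>k<n. A i k)"

definition norm_lap :: "nat \<Rightarrow> (nat \<Rightarrow> nat \<Rightarrow> real) \<Rightarrow> nat \<Rightarrow> nat \<Rightarrow> real" where
  "norm_lap n A i j = A i j / (sqrt (degree n A i) * sqrt (degree n A j))"

definition mat_mult :: "nat \<Rightarrow> (nat \<Rightarrow> nat \<Rightarrow> real) \<Rightarrow> (nat \<Rightarrow> nat \<Rightarrow> real) \<Rightarrow> nat \<Rightarrow> nat \<Rightarrow> real" where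
  "mat_mult n A B i j = (\<Sum>k<n. A i k * B k j)"

definition frob_norm :: "nat \<Rightarrow> (nat \<Rightarrow> nat \<Rightarrow> real) \<Rightarrow> real" where
  "frob_norm n A = sqrt (\<Sum>i<n. \<Sum>j<n. (A i j)\<^sup>2)"

end

theory Submission
  imports Defs
begin

text \<open>Entrywise, \<open>(LL)\<^sub>i\<^sub>j = (\<Sum>\<^sub>k W\<^sub>i\<^sub>k W\<^sub>k\<^sub>j / D\<^sub>k\<^sub>k) / sqrt (D\<^sub>i\<^sub>i D\<^sub>j\<^sub>j)\<close>, so it suffices to control
  the degrees \<open>D\<^sub>i\<^sub>i\<close> and the weighted path counts \<open>\<Sum>\<^sub>k W\<^sub>i\<^sub>k W\<^sub>k\<^sub>j / \<D>\<^sub>k\<^sub>k\<close>. For fixed \<open>i, j\<close> the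
  summands with \<open>k \<notin> {i, j}\<close> depend on the pairwise disjoint edge sets \<open>{ik, kj}\<close>, so they are
  independent and bounded, and Hoeffding's inequality at deviation \<open>\<epsilon> = log n / sqrt n\<close>
  (\<open>\<tau> n \<epsilon>\<close> for the degrees) fails for each of these \<open>n + n\<^sup>2\<close> sums with probability at most
  \<open>2 n powr (-2 \<tau>\<^sup>2 log n)\<close>. When none fails, every entry of \<open>LL - \<L>\<L>\<close> is at most
  \<open>(8 \<epsilon> + 2 \<delta>\<^sub>i\<^sub>j) / (\<tau>\<^sup>2 n)\<close>, the diagonal term being the bias caused by \<open>W\<^sub>i\<^sub>k\<^sup>2 = W\<^sub>i\<^sub>k\<close>;
  summing squares gives the Frobenius bound.\<close>

section \<open>Concentration of weighted path counts\<close>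

definition edge :: "nat \<Rightarrow> nat \<Rightarrow> nat \<times> nat" where
  "edge a b = (min a b, max a b)"

definition path_edges :: "nat \<Rightarrow> nat \<Rightarrow> nat \<Rightarrow> (nat \<times> nat) set" where
  "path_edges i j k = {edge i k, edge k j}"

definition inner_vertices :: "nat \<Rightarrow> nat \<Rightarrow> nat \<Rightarrow> nat set" where
  "inner_vertices n i j = {k. k < n \<and> k \<noteq> i \<and> k \<noteq> j}"

text \<open>\<open>\<bbbE>(W\<^sub>i\<^sub>k W\<^sub>k\<^sub>j)\<close> for \<open>k \<notin> {i, j}\<close>; when \<open>i = j\<close> the two edges of the path coincide.\<close>
definition path_prob :: "(nat \<Rightarrow> nat \<Rightarrow> real) \<Rightarrow> nat \<Rightarrow> nat \<Rightarrow> nat \<Rightarrow> real" where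
  "path_prob P i j k = (if i = j then pop P i k else pop P i k * pop P k j)"

lemma finite_upper_pairs: "finite (upper_pairs n)"
proof -
  have "upper_pairs n \<subseteq> {..<n} \<times> {..<n}" by (auto simp: upper_pairs_def)
  then show ?thesis by (rule finite_subset) auto
qed

lemma edge_in_upper_pairs: "a < n \<Longrightarrow> b < n \<Longrightarrow> a \<noteq> b \<Longrightarrow> edge a b \<in> upper_pairs n"
  by (auto simp: edge_def upper_pairs_def min_def max_def)

lemma edge_eq_iff: "edge a b = edge c d \<longleftrightarrow> (a = c \<and> b = d) \<or> (a = d \<and> b = c)"
  by (auto simp: edge_def min_def max_def split: if_splits)

lemma path_edges_subset_upper_pairs:
  "k \<in> inner_vertices n i j \<Longrightarrow> i < n \<Longrightarrow> j < n \<Longrightarrow> path_edges i j k \<subseteq> upper_pairs n"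
  by (auto simp: path_edges_def inner_vertices_def intro!: edge_in_upper_pairs)

lemma disjoint_family_on_path_edges: "disjoint_family_on (path_edges i j) (inner_vertices n i j)"
  unfolding disjoint_family_on_def path_edges_def inner_vertices_def by (auto simp: edge_eq_iff)

lemma prod_path_edges_indicator:
  assumes "k \<noteq> i" "k \<noteq> j"
  shows "(\<Prod>e\<in>path_edges i j k. of_bool (\<omega> e) :: real) = adj \<omega> i k * adj \<omega> k j"
proof (cases "i = j")
  case False
  then have "edge i k \<noteq> edge k j" using assms by (auto simp: edge_eq_iff)
  then show ?thesis using assms by (auto simp: path_edges_def adj_def edge_def min_def max_def)
qed (use assms in \<open>auto simp: path_edges_def adj_def edge_def min_def max_def\<close>)

lemma prod_path_edges_prob:
  assumes "k \<noteq> i" "k \<noteq> j"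
  shows "(\<Prod>e\<in>path_edges i j k. P (fst e) (snd e)) = path_prob P i j k"
proof (cases "i = j")
  case False
  then have "edge i k \<noteq> edge k j" using assms by (auto simp: edge_eq_iff)
  then show ?thesis using assms False
    by (auto simp: path_edges_def path_prob_def pop_def edge_def min_def max_def)
qed (use assms in \<open>auto simp: path_edges_def path_prob_def pop_def edge_def min_def max_def\<close>)

lemma sum_inner_vertices:
  assumes "i < n" "j < n" "f i = 0" "f j = 0"
  shows "(\<Sum>k\<in>inner_vertices n i j. f k) = (\<Sum>k<n. f k)"
  by (rule sum.mono_neutral_left) (use assms in \<open>auto simp: inner_vertices_def\<close>)

lemma expectation_prod_edge_indicators:
  assumes P_range: "\<And>i j. i < j \<Longrightarrow> j < n \<Longrightarrow> 0 \<le> P i j \<and> P i j \<le> 1"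
    and K: "K \<subseteq> upper_pairs n"
  shows "measure_pmf.expectation (edge_pmf n P) (\<lambda>\<omega>. \<Prod>e\<in>K. of_bool (\<omega> e))
         = (\<Prod>e\<in>K. P (fst e) (snd e))"
proof -
  let ?A = "upper_pairs n"
  have fin: "finite ?A" by (rule finite_upper_pairs)
  define f where "f = (\<lambda>e (b::bool). if e \<in> K then (of_bool b :: real) else 1)"
  have extend: "(\<Prod>e\<in>K. of_bool (\<omega> e)) = (\<Prod>e\<in>?A. f e (\<omega> e))" for \<omega> :: "nat \<times> nat \<Rightarrow> bool"
    by (rule prod.mono_neutral_cong_left[OF fin K]) (auto simp: f_def)
  have P_range': "0 \<le> P (fst e) (snd e) \<and> P (fst e) (snd e) \<le> 1" if "e \<in> ?A" for e
    using that P_range by (auto simp: upper_pairs_def)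
  have "measure_pmf.expectation (edge_pmf n P) (\<lambda>\<omega>. \<Prod>e\<in>?A. f e (\<omega> e))
        = (\<Prod>e\<in>?A. measure_pmf.expectation ((\<lambda>(i, j). bernoulli_pmf (P i j)) e) (f e))"
    unfolding edge_pmf_def
    by (rule expectation_prod_Pi_pmf[OF fin]) (auto simp: f_def integrable_measure_pmf_finite)
  also have "\<dots> = (\<Prod>e\<in>?A. if e \<in> K then P (fst e) (snd e) else 1)"
    by (intro prod.cong refl) (use P_range' in \<open>auto simp: f_def split: prod.splits\<close>)
  also have "\<dots> = (\<Prod>e\<in>K. P (fst e) (snd e))"
    using K by (simp add: prod.If_cases[OF fin] Int_absorb1)
  finally show ?thesis by (simp add: extend)
qed

lemma path_sum_concentration_inner:
  assumes P_range: "\<And>i j. i < j \<Longrightarrow> j < n \<Longrightarrow> 0 \<le> P i j \<and> P i j \<le> 1"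
    and ij: "i < n" "j < n"
    and c: "\<And>k. k < n \<Longrightarrow> 0 \<le> c k \<and> c k \<le> C" and C: "C > 0" and t: "t > 0"
  shows "measure_pmf.prob (edge_pmf n P)
     {\<omega>. t \<le> \<bar>(\<Sum>k\<in>inner_vertices n i j. c k * (\<Prod>e\<in>path_edges i j k. of_bool (\<omega> e)))
          - (\<Sum>k\<in>inner_vertices n i j. c k * (\<Prod>e\<in>path_edges i j k. P (fst e) (snd e)))\<bar>}
     \<le> 2 * exp (-2 * t\<^sup>2 / (real n * C\<^sup>2))"
proof (cases "inner_vertices n i j = {}")
  case False
  let ?M = "measure_pmf (edge_pmf n P)"
  let ?S = "inner_vertices n i j"
  define X where "X = (\<lambda>k (\<omega>::nat \<times> nat \<Rightarrow> bool). c k * (\<Prod>e\<in>path_edges i j k. of_bool (\<omega> e) :: real))"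
  have finS: "finite ?S" by (auto simp: inner_vertices_def)
  have cardS: "card ?S \<le> n"
    using card_mono[of "{..<n}" ?S] by (auto simp: inner_vertices_def)
  have cardS_pos: "card ?S > 0" using False finS by (simp add: card_gt_0_iff)
  have indep_edges: "prob_space.indep_vars ?M (\<lambda>_. count_space UNIV) (\<lambda>e \<omega>. \<omega> e) (upper_pairs n)"
    unfolding edge_pmf_def by (rule indep_vars_Pi_pmf[OF finite_upper_pairs])
  have indep_paths: "prob_space.indep_vars ?M (\<lambda>k. PiM (path_edges i j k) (\<lambda>_. count_space UNIV))
      (\<lambda>k \<omega>. restrict \<omega> (path_edges i j k)) ?S"
    by (rule prob_space.indep_vars_restrict[OF measure_pmf.prob_space_axioms, OF indep_edges
          path_edges_subset_upper_pairs[OF _ ij] disjoint_family_on_path_edges])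
  have "prob_space.indep_vars ?M (\<lambda>_. borel)
      (\<lambda>k \<omega>. c k * (\<Prod>e\<in>path_edges i j k. of_bool (restrict \<omega> (path_edges i j k) e) :: real)) ?S"
    by (rule prob_space.indep_vars_compose2[OF measure_pmf.prob_space_axioms, OF indep_paths]) measurable
  then have indep: "prob_space.indep_vars ?M (\<lambda>_. borel) X ?S"
    by (rule prob_space.indep_vars_cong[OF measure_pmf.prob_space_axioms, THEN iffD1, rotated -1]) (auto simp: X_def fun_eq_iff)
  interpret H: Hoeffding_ineq ?M ?S X "\<lambda>_. 0" "\<lambda>_. C"
      "\<Sum>k\<in>?S. measure_pmf.expectation (edge_pmf n P) (X k)"
  proof unfold_locales
    fix k assume k: "k \<in> ?S"
    have "X k x \<in> {0..C}" for x
    proof -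
      have "(\<Prod>e\<in>path_edges i j k. of_bool (x e) :: real) \<in> {0..1}"
        by (auto intro!: prod_nonneg prod_le_1)
      then show ?thesis using c[of k] k
        by (auto simp: X_def inner_vertices_def intro: order.trans[OF mult_right_le_one_le])
    qed
    then show "AE x in ?M. X k x \<in> {0..C}" by simp
  qed (use finS indep in simp_all)
  have mean: "(\<Sum>k\<in>?S. measure_pmf.expectation (edge_pmf n P) (X k))
      = (\<Sum>k\<in>?S. c k * (\<Prod>e\<in>path_edges i j k. P (fst e) (snd e)))"
    using expectation_prod_edge_indicators[OF P_range path_edges_subset_upper_pairs[OF _ ij]]
    by (intro sum.cong) (simp_all add: X_def)
  have "measure_pmf.prob (edge_pmf n P) {x \<in> space ?M. t \<le> \<bar>(\<Sum>k\<in>?S. X k x)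
          - (\<Sum>k\<in>?S. measure_pmf.expectation (edge_pmf n P) (X k))\<bar>}
        \<le> 2 * exp (-2 * t\<^sup>2 / (\<Sum>k\<in>?S. (C - 0)\<^sup>2))"
    by (rule H.Hoeffding_ineq_abs_ge) (use t cardS_pos C in auto)
  also have "\<dots> \<le> 2 * exp (-2 * t\<^sup>2 / (real n * C\<^sup>2))"
    using cardS cardS_pos C t
    by (simp add: frac_le mult_right_mono)
  finally show ?thesis unfolding mean by (simp add: X_def)
qed (use t in simp)

lemma path_count_concentration:
  assumes P_range: "\<And>i j. i < j \<Longrightarrow> j < n \<Longrightarrow> 0 \<le> P i j \<and> P i j \<le> 1"
    and ij: "i < n" "j < n"
    and c: "\<And>k. k < n \<Longrightarrow> 0 \<le> c k \<and> c k \<le> C" and C: "C > 0" and t: "t > 0"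
  shows "measure_pmf.prob (edge_pmf n P)
     {\<omega>. t \<le> \<bar>(\<Sum>k<n. c k * (adj \<omega> i k * adj \<omega> k j)) - (\<Sum>k<n. c k * path_prob P i j k)\<bar>}
     \<le> 2 * exp (-2 * t\<^sup>2 / (real n * C\<^sup>2))"
proof -
  have "(\<Sum>k\<in>inner_vertices n i j. c k * (\<Prod>e\<in>path_edges i j k. of_bool (\<omega> e)))
      = (\<Sum>k<n. c k * (adj \<omega> i k * adj \<omega> k j))" for \<omega>
    by (subst sum_inner_vertices[OF ij, symmetric])
       (auto simp: adj_def inner_vertices_def prod_path_edges_indicator intro: sum.cong)
  moreover have "(\<Sum>k\<in>inner_vertices n i j. c k * (\<Prod>e\<in>path_edges i j k. P (fst e) (snd e)))
      = (\<Sum>k<n. c k * path_prob P i j k)"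
    by (subst sum_inner_vertices[OF ij, symmetric])
       (auto simp: path_prob_def pop_def inner_vertices_def prod_path_edges_prob intro: sum.cong)
  ultimately show ?thesis
    using path_sum_concentration_inner[where P = P and c = c, OF P_range ij c C t] by simp
qed

section \<open>Deterministic perturbation of the Laplacian product\<close>

lemma adj_range: "0 \<le> adj \<omega> i k \<and> adj \<omega> i k \<le> 1"
  by (simp add: adj_def)

lemma adj_mul_adj_sym: "adj \<omega> i k * adj \<omega> k i = adj \<omega> i k"
  by (simp add: adj_def min.commute max.commute)

lemma pop_sym: "pop P i k = pop P k i"
  by (simp add: pop_def min.commute max.commute)

lemma pop_range:
  assumes P_range: "\<And>i j. i < j \<Longrightarrow> j < n \<Longrightarrow> 0 \<le> P i j \<and> P i j \<le> 1"
    and "i < n" "k < n"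
  shows "0 \<le> pop P i k \<and> pop P i k \<le> 1"
proof (cases "i = k")
  case False
  then have "min i k < max i k" "max i k < n" using assms(2,3) by (auto simp: min_def max_def)
  then show ?thesis using P_range False by (simp add: pop_def)
qed (simp add: pop_def)

lemma mat_mult_norm_lap_self:
  assumes "\<And>k. k < n \<Longrightarrow> degree n A k \<ge> 0"
  shows "mat_mult n (norm_lap n A) (norm_lap n A) i j
       = (\<Sum>k<n. A i k * A k j / degree n A k) / (sqrt (degree n A i) * sqrt (degree n A j))"
  unfolding mat_mult_def norm_lap_def sum_divide_distrib
proof (intro sum.cong refl)
  fix k assume "k \<in> {..<n}"
  then have "sqrt (degree n A k) * sqrt (degree n A k) = degree n A k"
    using assms by simp
  moreover have "A i k / (sqrt (degree n A i) * sqrt (degree n A k)) * (A k j / (sqrt (degree n A k) * sqrt (degree n A j)))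
      = A i k * A k j / (sqrt (degree n A k) * sqrt (degree n A k)) / (sqrt (degree n A i) * sqrt (degree n A j))"
    by (simp only: times_divide_times_eq divide_divide_eq_left mult_ac)
  ultimately show "A i k / (sqrt (degree n A i) * sqrt (degree n A k)) * (A k j / (sqrt (degree n A k) * sqrt (degree n A j)))
     = A i k * A k j / degree n A k / (sqrt (degree n A i) * sqrt (degree n A j))"
    by simp
qed

lemma divide_perturbation:
  fixes N \<epsilon> w d D :: real
  assumes N: "N > 0" and \<epsilon>: "0 \<le> \<epsilon>" "\<epsilon> \<le> 1/2" and D: "N \<le> D" and d: "\<bar>d - D\<bar> \<le> N * \<epsilon>"
    and w: "0 \<le> w" "w \<le> 1"
  shows "\<bar>w / d - w / D\<bar> \<le> 2 * \<epsilon> / N"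
proof -
  have "N * \<epsilon> \<le> N / 2" using N \<epsilon> by (simp add: mult_left_mono[of \<epsilon> "1/2" N, simplified])
  then have d_ge: "N / 2 \<le> d" using D d by linarith
  then have "d > 0" "D > 0" using N D by linarith+
  then have "w / d - w / D = w * (D - d) / (d * D)" by (simp add: field_simps)
  then have "\<bar>w / d - w / D\<bar> = w * \<bar>D - d\<bar> / (d * D)"
    using w \<open>d > 0\<close> \<open>D > 0\<close> by (simp add: abs_mult abs_div)
  also have "\<dots> \<le> 1 * (N * \<epsilon>) / ((N / 2) * N)"
  proof (rule frac_le)
    show "w * \<bar>D - d\<bar> \<le> 1 * (N * \<epsilon>)" using w d by (intro mult_mono) auto
    show "N / 2 * N \<le> d * D" using d_ge D N by (intro mult_mono) auto
  qed (use N \<epsilon> in auto)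
  also have "\<dots> = 2 * \<epsilon> / N" using N by (simp add: field_simps)
  finally show ?thesis .
qed

lemma sqrt_prod_perturbation:
  fixes N \<epsilon> d1 d2 D1 D2 :: real
  assumes N: "N > 0" and \<epsilon>: "0 \<le> \<epsilon>" "\<epsilon> \<le> 1/2" and D: "N \<le> D1" "N \<le> D2"
    and d: "\<bar>d1 - D1\<bar> \<le> N * \<epsilon>" "\<bar>d2 - D2\<bar> \<le> N * \<epsilon>"
  shows "N / 2 \<le> sqrt d1 * sqrt d2"
    and "\<bar>1 / (sqrt d1 * sqrt d2) - 1 / (sqrt D1 * sqrt D2)\<bar> \<le> 2 * \<epsilon> / N"
proof -
  define s where "s = sqrt d1 * sqrt d2"
  define S where "S = sqrt D1 * sqrt D2"
  have "N * \<epsilon> \<le> D1 * \<epsilon>" "N * \<epsilon> \<le> D2 * \<epsilon>" using D \<epsilon> by (simp_all add: mult_right_mono)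
  then have d_lo: "(1 - \<epsilon>) * D1 \<le> d1" "(1 - \<epsilon>) * D2 \<le> d2"
    and d_hi: "d1 \<le> (1 + \<epsilon>) * D1" "d2 \<le> (1 + \<epsilon>) * D2"
    using d by (simp_all add: algebra_simps)
  have "N * N \<le> D1 * D2" using D N by (intro mult_mono) auto
  then have S_ge: "N \<le> S" using N real_sqrt_le_mono[of "N * N" "D1 * D2"] by (simp add: S_def real_sqrt_mult)
  have lo_nonneg: "0 \<le> (1 - \<epsilon>) * D1" "0 \<le> (1 - \<epsilon>) * D2" using D N \<epsilon> by simp_all
  then have d_nonneg: "0 \<le> d1" "0 \<le> d2" using d_lo by linarith+
  have "((1 - \<epsilon>) * D1) * ((1 - \<epsilon>) * D2) \<le> d1 * d2"
    using d_lo lo_nonneg d_nonneg by (intro mult_mono) auto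
  then have "sqrt (((1 - \<epsilon>) * S)\<^sup>2) \<le> s"
    unfolding s_def S_def real_sqrt_mult[symmetric] using \<epsilon> D N
    by (simp add: power_mult_distrib real_sqrt_le_mono mult_ac power2_eq_square)
  then have s_lo: "(1 - \<epsilon>) * S \<le> s" using \<epsilon> S_ge N by simp
  have "d1 * d2 \<le> ((1 + \<epsilon>) * D1) * ((1 + \<epsilon>) * D2)"
    using d_hi d_nonneg by (intro mult_mono) auto
  then have "s \<le> sqrt (((1 + \<epsilon>) * S)\<^sup>2)"
    unfolding s_def S_def real_sqrt_mult[symmetric] using \<epsilon> D N
    by (simp add: power_mult_distrib real_sqrt_le_mono mult_ac power2_eq_square)
  then have s_hi: "s \<le> (1 + \<epsilon>) * S" using \<epsilon> S_ge N by simp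
  have "(1/2) * N \<le> (1 - \<epsilon>) * S" using \<epsilon> S_ge N by (intro mult_mono) auto
  then show s_ge: "N / 2 \<le> sqrt d1 * sqrt d2" using s_lo by (simp add: s_def)
  then have "s > 0" "S > 0" using N S_ge by (auto simp: s_def)
  then have "\<bar>1 / s - 1 / S\<bar> = \<bar>S - s\<bar> / (s * S)" by (simp add: field_simps abs_div)
  also have "\<dots> \<le> (\<epsilon> * S) / (s * S)"
    using s_lo s_hi \<open>s > 0\<close> \<open>S > 0\<close> by (intro divide_right_mono) (auto simp: algebra_simps)
  also have "\<dots> = \<epsilon> / s" using \<open>S > 0\<close> by simp
  also have "\<dots> \<le> \<epsilon> / (N / 2)" using s_ge N \<epsilon> by (intro divide_left_mono) (auto simp: s_def)
  also have "\<dots> = 2 * \<epsilon> / N" by simp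
  finally show "\<bar>1 / (sqrt d1 * sqrt d2) - 1 / (sqrt D1 * sqrt D2)\<bar> \<le> 2 * \<epsilon> / N"
    by (simp add: s_def S_def)
qed

lemma normalized_path_sum_perturbation:
  fixes n :: nat and \<tau> \<epsilon> \<beta> :: real and w p r d D :: "nat \<Rightarrow> real"
  assumes \<tau>: "0 < \<tau>" "\<tau> \<le> 1" and \<epsilon>: "0 \<le> \<epsilon>" "\<epsilon> \<le> 1/2" and n: "n > 0" and \<beta>: "\<beta> \<ge> 0"
    and w: "\<And>k. k < n \<Longrightarrow> 0 \<le> w k \<and> w k \<le> 1"
    and p: "\<And>k. k < n \<Longrightarrow> 0 \<le> p k \<and> p k \<le> 1"
    and D: "\<And>k. k < n \<Longrightarrow> \<tau> * n \<le> D k"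
    and d: "\<And>k. k < n \<Longrightarrow> \<bar>d k - D k\<bar> \<le> \<tau> * n * \<epsilon>"
    and ij: "i < n" "j < n"
    and wr: "\<bar>(\<Sum>k<n. w k / D k) - (\<Sum>k<n. r k / D k)\<bar> \<le> \<epsilon>"
    and rp: "\<bar>(\<Sum>k<n. r k / D k) - (\<Sum>k<n. p k / D k)\<bar> \<le> \<beta>"
  shows "\<bar>(\<Sum>k<n. w k / d k) / (sqrt (d i) * sqrt (d j)) - (\<Sum>k<n. p k / D k) / (sqrt (D i) * sqrt (D j))\<bar>
         \<le> (8 * \<epsilon> / \<tau> + 2 * \<beta>) / (\<tau> * n)"
proof -
  define N where "N = \<tau> * real n"
  have N: "N > 0" using \<tau> n by (simp add: N_def)
  define a where "a = (\<Sum>k<n. w k / d k)"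
  define A where "A = (\<Sum>k<n. p k / D k)"
  define s where "s = sqrt (d i) * sqrt (d j)"
  define S where "S = sqrt (D i) * sqrt (D j)"
  have "\<bar>a - (\<Sum>k<n. w k / D k)\<bar> \<le> (\<Sum>k<n. \<bar>w k / d k - w k / D k\<bar>)"
    unfolding a_def sum_subtractf[symmetric] by (rule sum_abs)
  also have "\<dots> \<le> (\<Sum>k<n. 2 * \<epsilon> / N)"
    using divide_perturbation[OF N \<epsilon>] w D d by (intro sum_mono) (simp add: N_def)
  also have "\<dots> = 2 * \<epsilon> / \<tau>" using n \<tau> by (simp add: N_def)
  finally have aA: "\<bar>a - A\<bar> \<le> 2 * \<epsilon> / \<tau> + \<epsilon> + \<beta>"
    using wr rp by (simp add: A_def)
  have "0 < D k" if "k < n" for k using D[OF that] N by (simp add: N_def)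
  then have A_nonneg: "0 \<le> A"
    unfolding A_def using p by (intro sum_nonneg divide_nonneg_nonneg) (auto simp: less_imp_le)
  have "A \<le> (\<Sum>k<n. 1 / N)"
    unfolding A_def using p D N by (intro sum_mono frac_le) (auto simp: N_def)
  then have A_le: "A \<le> 1 / \<tau>" using n \<tau> by (simp add: N_def)
  have D': "N \<le> D k" and d': "\<bar>d k - D k\<bar> \<le> N * \<epsilon>" if "k < n" for k
    using D[OF that] d[OF that] by (simp_all add: N_def)
  have s_ge: "N / 2 \<le> s" and sS: "\<bar>1 / s - 1 / S\<bar> \<le> 2 * \<epsilon> / N"
    unfolding s_def S_def
    using sqrt_prod_perturbation[OF N \<epsilon> D'[OF ij(1)] D'[OF ij(2)] d'[OF ij(1)] d'[OF ij(2)]] by simp_all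
  have "s > 0" using s_ge N by linarith
  then have "\<bar>a / s - A / S\<bar> = \<bar>(a - A) / s + A * (1 / s - 1 / S)\<bar>"
    by (simp add: field_simps)
  also have "\<dots> \<le> \<bar>a - A\<bar> / s + A * \<bar>1 / s - 1 / S\<bar>"
    by (rule order.trans[OF abs_triangle_ineq]) (use \<open>s > 0\<close> A_nonneg in \<open>simp add: abs_mult abs_div\<close>)
  also have "\<dots> \<le> (2 * \<epsilon> / \<tau> + \<epsilon> + \<beta>) / (N / 2) + (1 / \<tau>) * (2 * \<epsilon> / N)"
    using aA s_ge N A_nonneg A_le sS \<tau> by (intro add_mono frac_le mult_mono) auto
  also have "\<dots> = (6 * \<epsilon> / \<tau> + 2 * \<epsilon> + 2 * \<beta>) / N"
    using N \<tau> by (simp add: field_simps)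
  also have "\<dots> \<le> (8 * \<epsilon> / \<tau> + 2 * \<beta>) / N"
  proof -
    have "\<epsilon> \<le> \<epsilon> / \<tau>" using \<tau> \<epsilon> by (simp add: le_divide_eq mult_left_le)
    then show ?thesis using N by (intro divide_right_mono) auto
  qed
  finally show ?thesis by (simp add: a_def A_def s_def S_def N_def)
qed

lemma sum_bernoulli_variance_divide_le:
  fixes q D :: "nat \<Rightarrow> real"
  assumes \<tau>: "\<tau> > 0" and n: "n > 0" and q: "\<And>k. k < n \<Longrightarrow> 0 \<le> q k \<and> q k \<le> 1"
    and D: "\<And>k. k < n \<Longrightarrow> \<tau> * n \<le> D k"
  shows "\<bar>(\<Sum>k<n. q k / D k) - (\<Sum>k<n. q k * q k / D k)\<bar> \<le> 1 / \<tau>"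
proof -
  have D_pos: "D k > 0" if "k < n" for k
    using D[OF that] \<tau> n by (meson mult_pos_pos of_nat_0_less_iff order_less_le_trans)
  have lo: "0 \<le> (q k - q k * q k) / D k" if "k \<in> {..<n}" for k
    using q[of k] D_pos[of k] that by (auto intro!: divide_nonneg_pos simp: mult_left_le)
  have hi: "(q k - q k * q k) / D k \<le> 1 / (\<tau> * n)" if "k \<in> {..<n}" for k
  proof (rule frac_le)
    have "0 \<le> q k * q k" by simp
    moreover have "q k \<le> 1" using q[of k] that by simp
    ultimately show "q k - q k * q k \<le> 1" by linarith
  qed (use D[of k] \<tau> n that in auto)
  have "0 \<le> (\<Sum>k<n. (q k - q k * q k) / D k)" by (rule sum_nonneg) (rule lo)
  moreover have "(\<Sum>k<n. (q k - q k * q k) / D k) \<le> (\<Sum>k<n. 1 / (\<tau> * n))"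
    by (rule sum_mono) (rule hi)
  moreover have "(\<Sum>k<n. 1 / (\<tau> * real n)) = 1 / \<tau>" using n by simp
  ultimately show ?thesis
    by (simp add: sum_subtractf[symmetric] diff_divide_distrib)
qed

lemma frob_norm_lt_of_entry_bound:
  fixes E :: "nat \<Rightarrow> nat \<Rightarrow> real"
  assumes \<tau>: "\<tau> > 0" and n: "n > 0" and \<epsilon>: "\<epsilon> > 0" and \<epsilon>_n: "1/4 \<le> \<epsilon>\<^sup>2 * real n"
    and E: "\<And>i j. i < n \<Longrightarrow> j < n \<Longrightarrow>
        \<bar>E i j\<bar> \<le> (8 * \<epsilon> / \<tau> + 2 * (if i = j then 1 / \<tau> else 0)) / (\<tau> * n)"
  shows "frob_norm n E < 32 * sqrt 2 * \<epsilon> / \<tau>\<^sup>2"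
proof -
  define a where "a = 128 * \<epsilon>\<^sup>2 / (\<tau>^4 * (real n)\<^sup>2)"
  define b where "b = 8 / (\<tau>^4 * (real n)\<^sup>2)"
  have E_sq: "(E i j)\<^sup>2 \<le> a + (if i = j then b else 0)" if "i < n" "j < n" for i j
  proof -
    define u where "u = 8 * \<epsilon> / \<tau>"
    define v where "v = (if i = j then 1 / \<tau> else 0)"
    have "\<bar>E i j\<bar> \<le> (u + 2 * v) / (\<tau> * n)" using E[OF that] by (simp add: u_def v_def)
    then have "\<bar>E i j\<bar>\<^sup>2 \<le> ((u + 2 * v) / (\<tau> * n))\<^sup>2" by (rule power_mono) simp
    then have "(E i j)\<^sup>2 \<le> ((u + 2 * v) / (\<tau> * n))\<^sup>2" by simp
    also have "\<dots> \<le> (2 * u\<^sup>2 + 8 * v\<^sup>2) / (\<tau> * n)\<^sup>2"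
      unfolding power_divide
    proof (rule divide_right_mono)
      show "(u + 2 * v)\<^sup>2 \<le> 2 * u\<^sup>2 + 8 * v\<^sup>2"
        using zero_le_square[of "u - 2 * v"] by (simp add: power2_eq_square algebra_simps)
    qed simp
    also have "\<dots> = a + (if i = j then b else 0)"
      using \<tau> n by (simp add: a_def b_def u_def v_def field_simps power2_eq_square power4_eq_xxxx)
    finally show ?thesis .
  qed
  have "(\<Sum>i<n. \<Sum>j<n. (E i j)\<^sup>2) \<le> (\<Sum>i<n. \<Sum>j<n. a + (if i = j then b else 0))"
    using E_sq by (intro sum_mono) auto
  also have "\<dots> = real n * (real n * a + b)"
    by (simp add: sum.distrib)
  also have "\<dots> = 128 * \<epsilon>\<^sup>2 / \<tau>^4 + 8 / (\<tau>^4 * real n)"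
    using n \<tau> by (simp add: a_def b_def field_simps power2_eq_square)
  also have "\<dots> < 2048 * \<epsilon>\<^sup>2 / \<tau>^4"
  proof -
    have "8 / real n < 1920 * \<epsilon>\<^sup>2" using \<epsilon>_n n by (simp add: field_simps)
    then have "8 / real n / \<tau>^4 < 1920 * \<epsilon>\<^sup>2 / \<tau>^4" using \<tau> by (intro divide_strict_right_mono) auto
    moreover have "8 / real n / \<tau>^4 = 8 / (\<tau>^4 * real n)" by (simp add: mult.commute)
    moreover have "2048 * \<epsilon>\<^sup>2 / \<tau>^4 = 1920 * \<epsilon>\<^sup>2 / \<tau>^4 + 128 * \<epsilon>\<^sup>2 / \<tau>^4"
      by (simp add: add_divide_distrib[symmetric])
    ultimately show ?thesis by linarith
  qed
  also have "\<dots> = (32 * sqrt 2 * \<epsilon> / \<tau>\<^sup>2)\<^sup>2"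
    by (simp add: power_mult_distrib power_divide power2_eq_square[of "sqrt 2"] field_simps)
  finally show ?thesis
    unfolding frob_norm_def using \<epsilon> \<tau> by (simp add: real_sqrt_less_iff real_less_lsqrt)
qed

lemma frob_norm_laplacian_square_diff_lt:
  assumes P_range: "\<And>i j. i < j \<Longrightarrow> j < n \<Longrightarrow> 0 \<le> P i j \<and> P i j \<le> 1"
    and \<tau>: "0 < \<tau>" "\<tau> \<le> 1" and \<epsilon>: "0 < \<epsilon>" "\<epsilon> \<le> 1/2" "1/4 \<le> \<epsilon>\<^sup>2 * real n" and n: "n > 0"
    and pop_degree: "\<And>k. k < n \<Longrightarrow> \<tau> * n \<le> degree n (pop P) k"
    and degree_close: "\<And>k. k < n \<Longrightarrow> \<bar>degree n (adj \<omega>) k - degree n (pop P) k\<bar> \<le> \<tau> * n * \<epsilon>"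
    and path_close: "\<And>i j. i < n \<Longrightarrow> j < n \<Longrightarrow>
      \<bar>(\<Sum>k<n. adj \<omega> i k * adj \<omega> k j / degree n (pop P) k)
        - (\<Sum>k<n. path_prob P i j k / degree n (pop P) k)\<bar> \<le> \<epsilon>"
  shows "frob_norm n (\<lambda>i j. mat_mult n (norm_lap n (adj \<omega>)) (norm_lap n (adj \<omega>)) i j
                          - mat_mult n (norm_lap n (pop P)) (norm_lap n (pop P)) i j)
         < 32 * sqrt 2 * \<epsilon> / \<tau>\<^sup>2"
proof (rule frob_norm_lt_of_entry_bound[OF \<tau>(1) n \<epsilon>(1) \<epsilon>(3)])
  fix i j assume ij: "i < n" "j < n"
  let ?D = "degree n (pop P)"
  have pop_range': "0 \<le> pop P i k \<and> pop P i k \<le> 1" if "i < n" "k < n" for i k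
    using pop_range[OF P_range that] .
  have "0 \<le> \<tau> * n" using \<tau> by simp
  then have "?D k \<ge> 0" if "k < n" for k
    using pop_degree[OF that] by linarith
  moreover have "degree n (adj \<omega>) k \<ge> 0" for k
    unfolding degree_def using adj_range by (intro sum_nonneg) auto
  ultimately have LL: "mat_mult n (norm_lap n (adj \<omega>)) (norm_lap n (adj \<omega>)) i j
        = (\<Sum>k<n. adj \<omega> i k * adj \<omega> k j / degree n (adj \<omega>) k)
          / (sqrt (degree n (adj \<omega>) i) * sqrt (degree n (adj \<omega>) j))"
      and \<L>\<L>: "mat_mult n (norm_lap n (pop P)) (norm_lap n (pop P)) i j
        = (\<Sum>k<n. pop P i k * pop P k j / ?D k) / (sqrt (?D i) * sqrt (?D j))"
    by (simp_all add: mat_mult_norm_lap_self)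
  have bias: "\<bar>(\<Sum>k<n. path_prob P i j k / ?D k) - (\<Sum>k<n. pop P i k * pop P k j / ?D k)\<bar>
      \<le> (if i = j then 1 / \<tau> else 0)"
    using sum_bernoulli_variance_divide_le[where q = "pop P i" and D = ?D,
        OF \<tau>(1) n pop_range'[OF ij(1)] pop_degree]
    by (cases "i = j") (simp_all add: path_prob_def pop_sym[of P _ j])
  show "\<bar>mat_mult n (norm_lap n (adj \<omega>)) (norm_lap n (adj \<omega>)) i j
          - mat_mult n (norm_lap n (pop P)) (norm_lap n (pop P)) i j\<bar>
        \<le> (8 * \<epsilon> / \<tau> + 2 * (if i = j then 1 / \<tau> else 0)) / (\<tau> * real n)"
    unfolding LL \<L>\<L>
  proof (rule normalized_path_sum_perturbation[OF \<tau> _ \<epsilon>(2) n _ _ _ pop_degree degree_close ij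
          path_close[OF ij] bias])
    show "0 \<le> adj \<omega> i k * adj \<omega> k j \<and> adj \<omega> i k * adj \<omega> k j \<le> 1" for k
      by (simp add: adj_def)
    show "0 \<le> pop P i k * pop P k j \<and> pop P i k * pop P k j \<le> 1" if "k < n" for k
      using pop_range'[OF ij(1) that] pop_range'[OF that ij(2)] by (auto intro: mult_le_one)
  qed (use \<tau> \<epsilon> in auto)
qed

definition degree_deviation :: "nat \<Rightarrow> (nat \<Rightarrow> nat \<Rightarrow> real) \<Rightarrow> real \<Rightarrow> nat \<Rightarrow> (nat \<times> nat \<Rightarrow> bool) set" where
  "degree_deviation n P t i = {\<omega>. t \<le> \<bar>degree n (adj \<omega>) i - degree n (pop P) i\<bar>}"

definition path_deviation ::
    "nat \<Rightarrow> (nat \<Rightarrow> nat \<Rightarrow> real) \<Rightarrow> real \<Rightarrow> nat \<times> nat \<Rightarrow> (nat \<times> nat \<Rightarrow> bool) set" where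
  "path_deviation n P t ij = {\<omega>. t \<le>
     \<bar>(\<Sum>k<n. adj \<omega> (fst ij) k * adj \<omega> k (snd ij) / degree n (pop P) k)
      - (\<Sum>k<n. path_prob P (fst ij) (snd ij) k / degree n (pop P) k)\<bar>}"

lemma prob_degree_deviation_le:
  assumes P_range: "\<And>i j. i < j \<Longrightarrow> j < n \<Longrightarrow> 0 \<le> P i j \<and> P i j \<le> 1"
    and i: "i < n" and t: "t > 0"
  shows "measure_pmf.prob (edge_pmf n P) (degree_deviation n P t i) \<le> 2 * exp (-2 * t\<^sup>2 / real n)"
  using path_count_concentration[where c = "\<lambda>_. 1" and C = 1 and j = i, OF P_range i i] t
  by (simp add: degree_deviation_def degree_def adj_mul_adj_sym path_prob_def)

lemma prob_path_deviation_le: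
  assumes P_range: "\<And>i j. i < j \<Longrightarrow> j < n \<Longrightarrow> 0 \<le> P i j \<and> P i j \<le> 1"
    and ij: "ij \<in> {..<n} \<times> {..<n}" and \<tau>: "\<tau> > 0" and t: "t > 0"
    and pop_degree: "\<And>k. k < n \<Longrightarrow> \<tau> * n \<le> degree n (pop P) k"
  shows "measure_pmf.prob (edge_pmf n P) (path_deviation n P t ij)
           \<le> 2 * exp (-2 * \<tau>\<^sup>2 * (t\<^sup>2 * real n))"
proof -
  have n: "n > 0" using ij by auto
  then have "-2 * t\<^sup>2 / (n * (1 / (\<tau> * n))\<^sup>2) = -2 * \<tau>\<^sup>2 * (t\<^sup>2 * real n)"
    using \<tau> by (simp add: power_divide power_mult_distrib power2_eq_square)
  moreover have "0 < \<tau> * n" using \<tau> n by simp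
  then have "0 \<le> 1 / degree n (pop P) k \<and> 1 / degree n (pop P) k \<le> 1 / (\<tau> * n)" if "k < n" for k
    using pop_degree[OF that] by (simp add: frac_le)
  ultimately show ?thesis
    using path_count_concentration[where n = n and P = P and i = "fst ij" and j = "snd ij"
        and c = "\<lambda>k. 1 / degree n (pop P) k" and C = "1 / (\<tau> * n)" and t = t, OF P_range] ij \<tau> n t
    by (auto simp: path_deviation_def)
qed

lemma laplacian_square_deviation_subset:
  assumes P_range: "\<And>i j. i < j \<Longrightarrow> j < n \<Longrightarrow> 0 \<le> P i j \<and> P i j \<le> 1"
    and \<tau>: "0 < \<tau>" "\<tau> \<le> 1" and \<epsilon>: "0 < \<epsilon>" "\<epsilon> \<le> 1/2" "1/4 \<le> \<epsilon>\<^sup>2 * real n" and n: "n > 0"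
    and pop_degree: "\<And>k. k < n \<Longrightarrow> \<tau> * n \<le> degree n (pop P) k"
  shows "{\<omega>. 32 * sqrt 2 * \<epsilon> / \<tau>\<^sup>2 \<le> frob_norm n (\<lambda>i j.
              mat_mult n (norm_lap n (adj \<omega>)) (norm_lap n (adj \<omega>)) i j
              - mat_mult n (norm_lap n (pop P)) (norm_lap n (pop P)) i j)}
         \<subseteq> (\<Union>i\<in>{..<n}. degree_deviation n P (\<tau> * n * \<epsilon>) i)
           \<union> (\<Union>ij\<in>{..<n} \<times> {..<n}. path_deviation n P \<epsilon> ij)"
proof (rule subsetI, rule ccontr)
  fix \<omega>
  assume \<omega>: "\<omega> \<in> {\<omega>. 32 * sqrt 2 * \<epsilon> / \<tau>\<^sup>2 \<le> frob_norm n (\<lambda>i j.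
              mat_mult n (norm_lap n (adj \<omega>)) (norm_lap n (adj \<omega>)) i j
              - mat_mult n (norm_lap n (pop P)) (norm_lap n (pop P)) i j)}"
    and good: "\<omega> \<notin> (\<Union>i\<in>{..<n}. degree_deviation n P (\<tau> * n * \<epsilon>) i)
           \<union> (\<Union>ij\<in>{..<n} \<times> {..<n}. path_deviation n P \<epsilon> ij)"
  have "\<omega> \<notin> degree_deviation n P (\<tau> * n * \<epsilon>) k" if "k < n" for k using good that by blast
  then have degree_close: "\<bar>degree n (adj \<omega>) k - degree n (pop P) k\<bar> \<le> \<tau> * n * \<epsilon>" if "k < n" for k
    using that unfolding degree_deviation_def by (simp add: not_le less_imp_le)
  have "\<omega> \<notin> path_deviation n P \<epsilon> (i, j)" if "i < n" "j < n" for i j using good that by blast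
  then have path_close: "\<bar>(\<Sum>k<n. adj \<omega> i k * adj \<omega> k j / degree n (pop P) k)
      - (\<Sum>k<n. path_prob P i j k / degree n (pop P) k)\<bar> \<le> \<epsilon>" if "i < n" "j < n" for i j
    using that unfolding path_deviation_def by (simp add: not_le less_imp_le)
  show False
    using frob_norm_laplacian_square_diff_lt[OF P_range \<tau> \<epsilon> n pop_degree degree_close path_close] \<omega>
    by simp
qed

lemma measure_pmf_prob_UN_le:
  fixes b :: real
  assumes "finite I" and "\<And>i. i \<in> I \<Longrightarrow> measure_pmf.prob p (A i) \<le> b"
  shows "measure_pmf.prob p (\<Union>i\<in>I. A i) \<le> card I * b"
proof -
  have "measure_pmf.prob p (\<Union>i\<in>I. A i) \<le> (\<Sum>i\<in>I. measure_pmf.prob p (A i))"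
    by (rule measure_pmf.finite_measure_subadditive_finite) (use assms in auto)
  also have "\<dots> \<le> card I * b" using sum_bounded_above[of I "\<lambda>i. measure_pmf.prob p (A i)" b] assms by simp
  finally show ?thesis .
qed

lemma prob_laplacian_square_deviation_le:
  assumes P_range: "\<And>i j. i < j \<Longrightarrow> j < n \<Longrightarrow> 0 \<le> P i j \<and> P i j \<le> 1"
    and \<tau>: "0 < \<tau>" "\<tau> \<le> 1" and \<epsilon>: "0 < \<epsilon>" "\<epsilon> \<le> 1/2" "1/4 \<le> \<epsilon>\<^sup>2 * real n" and n: "n > 0"
    and pop_degree: "\<And>k. k < n \<Longrightarrow> \<tau> * n \<le> degree n (pop P) k"
  shows "measure_pmf.prob (edge_pmf n P)
           {\<omega>. 32 * sqrt 2 * \<epsilon> / \<tau>\<^sup>2 \<le> frob_norm n (\<lambda>i j.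
              mat_mult n (norm_lap n (adj \<omega>)) (norm_lap n (adj \<omega>)) i j
              - mat_mult n (norm_lap n (pop P)) (norm_lap n (pop P)) i j)}
         \<le> (n + n\<^sup>2) * (2 * exp (-2 * \<tau>\<^sup>2 * (\<epsilon>\<^sup>2 * real n)))"
    (is "measure_pmf.prob ?M ?E \<le> _ * ?b")
proof -
  have "-2 * (\<tau> * n * \<epsilon>)\<^sup>2 / n = -2 * \<tau>\<^sup>2 * (\<epsilon>\<^sup>2 * real n)"
    using n by (simp add: power_mult_distrib power2_eq_square)
  then have degree_bound: "measure_pmf.prob ?M (degree_deviation n P (\<tau> * n * \<epsilon>) i) \<le> ?b"
    if "i \<in> {..<n}" for i
    using prob_degree_deviation_le[where n = n and P = P and i = i and t = "\<tau> * n * \<epsilon>", OF P_range]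
      that \<tau> \<epsilon> n by simp
  have "?E \<subseteq> (\<Union>i\<in>{..<n}. degree_deviation n P (\<tau> * n * \<epsilon>) i)
           \<union> (\<Union>ij\<in>{..<n} \<times> {..<n}. path_deviation n P \<epsilon> ij)"
    using laplacian_square_deviation_subset[OF P_range \<tau> \<epsilon> n pop_degree] by simp
  then have "measure_pmf.prob ?M ?E
      \<le> measure_pmf.prob ?M ((\<Union>i\<in>{..<n}. degree_deviation n P (\<tau> * n * \<epsilon>) i)
           \<union> (\<Union>ij\<in>{..<n} \<times> {..<n}. path_deviation n P \<epsilon> ij))"
    by (rule measure_pmf.finite_measure_mono) simp
  also have "\<dots> \<le> measure_pmf.prob ?M (\<Union>i\<in>{..<n}. degree_deviation n P (\<tau> * n * \<epsilon>) i)
      + measure_pmf.prob ?M (\<Union>ij\<in>{..<n} \<times> {..<n}. path_deviation n P \<epsilon> ij)"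
    by (rule measure_Un_le) simp_all
  also have "\<dots> \<le> card {..<n} * ?b + card ({..<n} \<times> {..<n}) * ?b"
    using degree_bound prob_path_deviation_le[OF P_range _ \<tau>(1) \<epsilon>(1) pop_degree]
    by (intro add_mono measure_pmf_prob_UN_le) auto
  finally show ?thesis by (simp add: power2_eq_square algebra_simps)
qed

lemma min_normalized_degree_bounds:
  assumes P_range: "\<And>i j. i < j \<Longrightarrow> j < n \<Longrightarrow> 0 \<le> P i j \<and> P i j \<le> 1" and n: "n > 0"
    and \<tau>: "\<tau> = Min ((\<lambda>i. degree n (pop P) i / real n) ` {..<n})"
  shows "0 \<le> \<tau>" "\<tau> \<le> 1" "\<And>i. i < n \<Longrightarrow> \<tau> * n \<le> degree n (pop P) i"
proof -
  have D_range: "0 \<le> degree n (pop P) i \<and> degree n (pop P) i \<le> real n" if "i < n" for i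
    using sum_mono[of "{..<n}" "pop P i" "\<lambda>_. 1"] pop_range[OF P_range that]
    by (auto simp: degree_def intro: sum_nonneg)
  have \<tau>_le: "\<tau> \<le> degree n (pop P) i / real n" if "i < n" for i
    unfolding \<tau> by (rule Min_le) (use that in auto)
  then show "\<tau> * n \<le> degree n (pop P) i" if "i < n" for i
    using that n by (simp add: le_divide_eq)
  have "\<tau> \<in> (\<lambda>i. degree n (pop P) i / real n) ` {..<n}"
    unfolding \<tau> by (rule Min_in) (use n in \<open>auto simp: lessThan_empty_iff\<close>)
  then show "0 \<le> \<tau>" "\<tau> \<le> 1"
    using \<tau>_le D_range n by (auto simp: divide_le_eq_1)
qed

lemma ln_div_sqrt_bounds:
  assumes "sqrt (real n) / ln (real n) > 2"
  shows "n \<ge> 2" and "0 < ln (real n) / sqrt (real n)" and "ln (real n) / sqrt (real n) \<le> 1/2"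
    and "1/4 \<le> (ln (real n) / sqrt (real n))\<^sup>2 * real n"
proof -
  have ln_pos: "ln (real n) > 0"
  proof (rule ccontr)
    assume "\<not> ln (real n) > 0"
    then have "sqrt (real n) / ln (real n) \<le> 0" by (simp add: divide_nonneg_nonpos)
    with assms show False by simp
  qed
  show n: "n \<ge> 2"
  proof (rule ccontr)
    assume "\<not> n \<ge> 2"
    then have "n = 0 \<or> n = 1" by auto
    with ln_pos show False by auto
  qed
  show "0 < ln (real n) / sqrt (real n)" using ln_pos n by simp
  show "ln (real n) / sqrt (real n) \<le> 1/2"
    using assms ln_pos n by (simp add: less_divide_eq divide_simps)
  have "ln (1/2::real) \<le> 1/2 - 1" by (rule ln_le_minus_one) simp
  then have "1/2 \<le> ln (2::real)" by (simp add: ln_div)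
  moreover have "ln 2 \<le> ln (real n)" using n by simp
  ultimately have "1/2 \<le> ln (real n)" by linarith
  then have "(1/2) * (1/2) \<le> ln (real n) * ln (real n)" by (intro mult_mono) auto
  then have "1/4 \<le> (ln (real n))\<^sup>2" by (simp add: power2_eq_square)
  then show "1/4 \<le> (ln (real n) / sqrt (real n))\<^sup>2 * real n"
    using n by (simp add: power_divide)
qed

lemma square_mult_exp_eq_powr:
  fixes x a :: real
  assumes "x > 0"
  shows "x\<^sup>2 * exp (- a * (ln x)\<^sup>2) = x powr (2 - a * ln x)"
proof -
  have "x powr (2 - a * ln x) = exp (2 * ln x) * exp (- a * (ln x)\<^sup>2)"
    using assms by (simp add: powr_def exp_add[symmetric] algebra_simps power2_eq_square)
  also have "exp (2 * ln x) = exp (ln x) * exp (ln x)"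
    by (simp only: mult_2 exp_add)
  also have "\<dots> = x\<^sup>2"
    using assms by (simp add: power2_eq_square)
  finally show ?thesis by simp
qed

theorem lemmaA1:
  fixes n :: nat and P :: "nat \<Rightarrow> nat \<Rightarrow> real"
  assumes P_range: "\<And>i j. i < j \<Longrightarrow> j < n \<Longrightarrow> 0 \<le> P i j \<and> P i j \<le> 1"
    and n_large: "sqrt (real n) / ln (real n) > 2"
  defines "\<tau> \<equiv> Min ((\<lambda>i. degree n (pop P) i / real n) ` {..<n})"
  shows "measure_pmf.prob (edge_pmf n P)
           {\<omega>. frob_norm n (\<lambda>i j. mat_mult n (norm_lap n (adj \<omega>)) (norm_lap n (adj \<omega>)) i j
                                  - mat_mult n (norm_lap n (pop P)) (norm_lap n (pop P)) i j)
                \<ge> 32 * sqrt 2 * ln (real n) / (\<tau>\<^sup>2 * sqrt (real n))}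
         \<le> 4 * real n powr (2 - 2 * \<tau>\<^sup>2 * ln (real n))"
    (is "measure_pmf.prob _ ?E \<le> ?R")
proof -
  define \<epsilon> where "\<epsilon> = ln (real n) / sqrt (real n)"
  note n = ln_div_sqrt_bounds[OF n_large, folded \<epsilon>_def]
  then have n_pos: "n > 0" by simp
  note \<tau> = min_normalized_degree_bounds[OF P_range n_pos \<tau>_def[THEN meta_eq_to_obj_eq]]
  show ?thesis
  proof (cases "\<tau> = 0")
    case True
    have "1 \<le> real n powr 2" using n(1) by (simp add: powr_numeral)
    then have "1 \<le> ?R" using True by simp
    then show ?thesis using measure_pmf.prob_le_1[of "edge_pmf n P" ?E] by linarith
  next
    case False
    have "measure_pmf.prob (edge_pmf n P) ?E
        \<le> (n + n\<^sup>2) * (2 * exp (-2 * \<tau>\<^sup>2 * (\<epsilon>\<^sup>2 * real n)))"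
      using prob_laplacian_square_deviation_le[where n = n and P = P and \<tau> = \<tau> and \<epsilon> = \<epsilon>,
          OF P_range _ \<tau>(2) n(2-4) n_pos \<tau>(3)] \<tau>(1) False
      by (simp add: \<epsilon>_def mult.commute)
    also have "\<epsilon>\<^sup>2 * real n = (ln (real n))\<^sup>2" using n_pos by (simp add: \<epsilon>_def power_divide)
    also have "(n + n\<^sup>2) * (2 * exp (-2 * \<tau>\<^sup>2 * (ln (real n))\<^sup>2))
        \<le> 4 * ((real n)\<^sup>2 * exp (- (2 * \<tau>\<^sup>2) * (ln (real n))\<^sup>2))"
      using n(1) by (simp add: power2_eq_square algebra_simps)
    also have "\<dots> = ?R"
      using square_mult_exp_eq_powr[of "real n" "2 * \<tau>\<^sup>2"] n_pos by simp
    finally show ?thesis .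
  qed
qed

end
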